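(* Let $K^2$ be the Klein bottle and $\mathcal R(K^2)=\mathrm{Hom}(\pi_1(K^2),\mathrm{SL}_2(\mathbb C))$ its representation variety. If $\rho\in\mathcal R(K^2)$ is irreducible, then $\rho$ is a smooth point of $\mathcal R(K^2)$ and its Zariski tangent space has dimension 4. *)

theory Defs
  imports "HOL-Analysis.Analysis"
begin

text \<open>Points of the ambient affine space of pairs of 2x2 complex matrices
  (A, B) = (rho(a), rho(b)), where pi_1 of the Klein bottle is presented as
  < a, b | a b a b^-1 >.\<close>

type_synonym pt = "(complex^2^2) \<times> (complex^2^2)"

definition mscale :: "complex \<Rightarrow> complex^2^2 \<Rightarrow> complex^2^2" where
  "mscale c X = (\<chi> i j. c * X$i$j)"

definition pscale :: "complex \<Rightarrow> pt \<Rightarrow> pt" where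
  "pscale c p = (mscale c (fst p), mscale c (snd p))"

definition cdim :: "pt set \<Rightarrow> nat" where
  "cdim S = vector_space.dim pscale S"

definition csubspace :: "pt set \<Rightarrow> bool" where
  "csubspace W \<longleftrightarrow> subspace W \<and> (\<forall>c w. w \<in> W \<longrightarrow> pscale c w \<in> W)"

definition RepK2 :: "pt set" where
  "RepK2 = {(A, B). det A = 1 \<and> det B = 1 \<and> A ** B ** A = B}"

text \<open>The defining polynomial map; R(K^2) is its zero set (as a scheme,
  det A = 1, det B = 1, A B A B^-1 = I, equivalently A B A = B on SL_2).\<close>
definition FK2 :: "pt \<Rightarrow> complex \<times> complex \<times> (complex^2^2)" where
  "FK2 p = (det (fst p) - 1, det (snd p) - 1, fst p ** snd p ** fst p - snd p)"

definition zariski_tangent :: "pt \<Rightarrow> pt set" where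
  "zariski_tangent \<rho> = {v. frechet_derivative FK2 (at \<rho>) v = 0}"

definition irreducible_rep :: "pt \<Rightarrow> bool" where
  "irreducible_rep \<rho> \<longleftrightarrow>
     \<not> (\<exists>v::complex^2. v \<noteq> 0 \<and> (\<exists>l m. fst \<rho> *v v = l *s v \<and> snd \<rho> *v v = m *s v))"

text \<open>R is a d-dimensional complex (holomorphic) submanifold near x: a
  neighbourhood of x in R is the holomorphically immersed homeomorphic image of an
  open subset of a d-dimensional complex linear subspace.\<close>
definition complex_manifold_at :: "pt set \<Rightarrow> pt \<Rightarrow> nat \<Rightarrow> bool" where
  "complex_manifold_at R x d \<longleftrightarrow>
     (\<exists>W U V \<phi> \<psi>. csubspace W \<and> cdim W = d \<and> open U \<and> x \<in> U \<and>
        openin (top_of_set W) V \<and> homeomorphism V (R \<inter> U) \<phi> \<psi> \<and>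
        (\<forall>v\<in>V. \<exists>D. (\<phi> has_derivative D) (at v within W) \<and> inj_on D W \<and>
              (\<forall>c w. w \<in> W \<longrightarrow> D (pscale c w) = pscale c (D w))))"

definition smooth_point_K2 :: "pt \<Rightarrow> bool" where
  "smooth_point_K2 \<rho> \<longleftrightarrow> \<rho> \<in> RepK2 \<and>
     (\<exists>d. complex_manifold_at RepK2 \<rho> d \<and> cdim (zariski_tangent \<rho>) = d)"

end

theory Submission
  imports Defs
begin

text \<open>Let (A, B) be irreducible with A B A = B. If A v = l v, then B v is an eigenvector
  of A for 1/l; by irreducibility v and B v span C^2, A is not scalar (so l^2 \<noteq> 1), and
  Cayley-Hamilton for B forces trace B = 0, i.e. B (B v) = -v. Hence (A, B) is conjugate to
  (diag(l, 1/l), [[0,-1],[1,0]]). Conjugation is a complex-linear automorphism of the ambient space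
  preserving the variety, so it suffices to work at this normal form. Near it, A B A = B is
  equivalent to trace B = 0 and trace (A B) = 0, and together with the determinant equations this
  determines the bottom rows of A and B holomorphically from the top rows: a chart of dimension 4.
  The Zariski tangent space there is likewise a graph over the four top-row coordinates.\<close>

definition mat2 :: "'a::zero \<Rightarrow> 'a \<Rightarrow> 'a \<Rightarrow> 'a \<Rightarrow> 'a^2^2" where
  "mat2 a b c d = (\<chi> i j. if i = 1 then (if j = 1 then a else b) else (if j = 1 then c else d))"

lemma mat2_nth [simp]:
  "mat2 a b c d $ 1 $ 1 = a" "mat2 a b c d $ 1 $ 2 = b"
  "mat2 a b c d $ 2 $ 1 = c" "mat2 a b c d $ 2 $ 2 = d"
  by (simp_all add: mat2_def)

lemma mat2_eq_iff:
  "(M::'a^2^2) = N \<longleftrightarrow> M$1$1 = N$1$1 \<and> M$1$2 = N$1$2 \<and> M$2$1 = N$2$1 \<and> M$2$2 = N$2$2"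
  by (auto simp: vec_eq_iff forall_2)

lemma vec2_eq_iff: "(v::'a^2) = w \<longleftrightarrow> v$1 = w$1 \<and> v$2 = w$2"
  by (auto simp: vec_eq_iff forall_2)

lemma mat2_eta: "M = mat2 (M$1$1) (M$1$2) (M$2$1) (M$2$2)"
  by (simp add: mat2_eq_iff)

lemma matrix_matrix_mult_nth2 [simp]:
  "((X::'a::semiring_1^2^2) ** Y) $ i $ j = X$i$1 * Y$1$j + X$i$2 * Y$2$j"
  by (simp add: matrix_matrix_mult_def sum_2)

lemma matrix_vector_mult_nth2 [simp]: "((M::'a::semiring_1^2^2) *v v) $ i = M$i$1 * v$1 + M$i$2 * v$2"
  by (simp add: matrix_vector_mult_def sum_2)

lemma mat1_nth2 [simp]:
  "(mat 1 :: 'a::zero_neq_one^2^2) $ 1 $ 1 = 1" "(mat 1 :: 'a::zero_neq_one^2^2) $ 2 $ 2 = 1"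
  "(mat 1 :: 'a::zero_neq_one^2^2) $ 1 $ 2 = 0" "(mat 1 :: 'a::zero_neq_one^2^2) $ 2 $ 1 = 0"
  by (simp_all add: mat_def)

lemma mscale_nth [simp]: "mscale c X $ i $ j = c * X $ i $ j"
  by (simp add: mscale_def)

lemma pscale_simps [simp]: "fst (pscale c p) = mscale c (fst p)" "snd (pscale c p) = mscale c (snd p)"
  by (simp_all add: pscale_def)

lemma cayley_hamilton_2:
  fixes B :: "'a::comm_ring_1^2^2"
  shows "B *v (B *v x) = trace B *s (B *v x) - det B *s x"
  by (simp add: vec2_eq_iff trace_def sum_2 det_2 algebra_simps)

lemma mat2_inverse:
  fixes a b c d :: "'a::field"
  defines "\<delta> \<equiv> a * d - b * c"
  assumes "\<delta> \<noteq> 0"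
  shows "mat2 a b c d ** mat2 (d / \<delta>) (- b / \<delta>) (- c / \<delta>) (a / \<delta>) = mat 1"
    and "mat2 (d / \<delta>) (- b / \<delta>) (- c / \<delta>) (a / \<delta>) ** mat2 a b c d = mat 1"
  using \<open>\<delta> \<noteq> 0\<close> by (simp_all add: mat2_eq_iff field_simps) (simp_all add: \<delta>_def algebra_simps)

lemma vec2_collinear:
  fixes v w :: "'a::field^2"
  assumes "v \<noteq> 0" and "v$1 * w$2 - w$1 * v$2 = 0"
  obtains m where "w = m *s v"
proof
  show "w = (if v$1 \<noteq> 0 then w$1 / v$1 else w$2 / v$2) *s v"
    using assms by (auto simp: vec2_eq_iff field_simps)
qed

lemma complex_2x2_has_eigenvector:
  fixes A :: "complex^2^2"
  obtains l v where "v \<noteq> 0" "A *v v = l *s v"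
proof (cases "A$1$2 = 0")
  case True
  then show ?thesis
    by (intro that[of "vector [0, 1]" "A$2$2"]) (auto simp: vec2_eq_iff)
next
  case False
  define t where "t = A$1$1 + A$2$2"
  define l where "l = (t + csqrt (t\<^sup>2 - 4 * det A)) / 2"
  have "l\<^sup>2 - t * l + det A = 0"
    using power2_csqrt[of "t\<^sup>2 - 4 * det A"] unfolding l_def
    by (simp add: power2_eq_square field_simps) algebra
  with False show ?thesis
    by (intro that[of "vector [A$1$2, l - A$1$1]" l])
      (auto simp: vec2_eq_iff det_2 t_def algebra_simps power2_eq_square)
qed

lemma bounded_linear_mat2:
  "bounded_linear (\<lambda>(a::complex, b::complex, c::complex, d::complex). mat2 a b c d)"
  unfolding linear_conv_bounded_linear[symmetric]
  by (rule linearI) (auto simp: mat2_eq_iff)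

lemma has_derivative_mat2 [derivative_intros]:
  fixes f1 f2 f3 f4 :: "_ \<Rightarrow> complex"
  assumes "(f1 has_derivative f1') (at x within s)" "(f2 has_derivative f2') (at x within s)"
    and "(f3 has_derivative f3') (at x within s)" "(f4 has_derivative f4') (at x within s)"
  shows "((\<lambda>x. mat2 (f1 x) (f2 x) (f3 x) (f4 x)) has_derivative
           (\<lambda>h. mat2 (f1' h) (f2' h) (f3' h) (f4' h))) (at x within s)"
  using bounded_linear.has_derivative[OF bounded_linear_mat2,
      OF has_derivative_Pair[OF assms(1) has_derivative_Pair[OF assms(2) has_derivative_Pair[OF assms(3,4)]]]]
  by simp

lemma continuous_on_mat2 [continuous_intros]:
  fixes f1 f2 f3 f4 :: "_ \<Rightarrow> complex"
  assumes "continuous_on S f1" "continuous_on S f2" "continuous_on S f3" "continuous_on S f4"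
  shows "continuous_on S (\<lambda>x. mat2 (f1 x) (f2 x) (f3 x) (f4 x))"
  using bounded_linear.continuous_on[OF bounded_linear_mat2,
      OF continuous_on_Pair[OF assms(1) continuous_on_Pair[OF assms(2) continuous_on_Pair[OF assms(3,4)]]]]
  by simp

lemma bounded_linear_mat_entry: "bounded_linear (\<lambda>M::complex^2^2. M $ i $ j)"
  by (rule bounded_linear_compose[OF bounded_linear_vec_nth bounded_linear_vec_nth])

lemma has_derivative_mat_entry [derivative_intros]:
  "(f has_derivative f') F \<Longrightarrow> ((\<lambda>x. (f x::complex^2^2) $ i $ j) has_derivative (\<lambda>h. f' h $ i $ j)) F"
  using bounded_linear.has_derivative[OF bounded_linear_mat_entry] by blast

lemma continuous_on_mat_entry [continuous_intros]:
  "continuous_on S f \<Longrightarrow> continuous_on S (\<lambda>x. (f x::complex^2^2) $ i $ j)"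
  using bounded_linear.continuous_on[OF bounded_linear_mat_entry] by blast

lemma has_derivative_matrix_entrywise:
  fixes f :: "'a::real_normed_vector \<Rightarrow> complex^2^2"
  assumes "\<And>i j. ((\<lambda>x. f x $ i $ j) has_derivative (\<lambda>h. f' h $ i $ j)) (at x within s)"
  shows "(f has_derivative f') (at x within s)"
  using has_derivative_mat2[OF assms[of 1 1] assms[of 1 2] assms[of 2 1] assms[of 2 2]]
  by (simp flip: mat2_eta)

lemma has_derivative_pt_entrywise:
  fixes f :: "'a::real_normed_vector \<Rightarrow> pt"
  assumes "\<And>i j. ((\<lambda>x. fst (f x) $ i $ j) has_derivative (\<lambda>h. fst (D h) $ i $ j)) (at w)"
    and "\<And>i j. ((\<lambda>x. snd (f x) $ i $ j) has_derivative (\<lambda>h. snd (D h) $ i $ j)) (at w)"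
  shows "(f has_derivative D) (at w)"
  using has_derivative_Pair[OF has_derivative_matrix_entrywise[OF assms(1)]
      has_derivative_matrix_entrywise[OF assms(2)]]
  by simp

lemma matrix_add_rdistrib: "((A::'a::semiring_1^'n^'m) + B) ** C = A ** C + B ** C"
  by (simp add: matrix_matrix_mult_def vec_eq_iff sum.distrib distrib_right)

lemma matrix_diff_rdistrib: "((A::'a::ring_1^'n^'m) - B) ** C = A ** C - B ** C"
  by (simp add: matrix_matrix_mult_def vec_eq_iff sum_subtractf left_diff_distrib)

lemma matrix_diff_ldistrib: "(A::'a::ring_1^'n^'m) ** (B - C) = A ** B - A ** C"
  by (simp add: matrix_matrix_mult_def vec_eq_iff sum_subtractf right_diff_distrib)

section \<open>Complex-linear structure of the ambient space\<close>

interpretation pv: vector_space pscale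
  by unfold_locales (auto simp: pscale_def mat2_eq_iff algebra_simps)

lemma pscale_of_real: "pscale (of_real r) p = r *\<^sub>R p"
  by (simp add: pscale_def prod_eq_iff mat2_eq_iff) (simp add: scaleR_conv_of_real)

lemma pscale_linear_imp_bounded_linear:
  assumes "Vector_Spaces.linear pscale pscale L"
  shows "bounded_linear L"
proof -
  interpret L: Vector_Spaces.linear pscale pscale L by fact
  have "linear L"
    by (rule linearI) (simp_all add: L.add L.scale flip: pscale_of_real)
  then show ?thesis by (simp add: linear_conv_bounded_linear)
qed

lemma cdim_eq_card_dual_basis:
  fixes v :: "'i \<Rightarrow> pt" and l :: "'i \<Rightarrow> pt \<Rightarrow> complex"
  assumes "finite I"
    and linear: "\<And>i. i \<in> I \<Longrightarrow> Vector_Spaces.linear pscale (*) (l i)"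
    and dual: "\<And>i j. i \<in> I \<Longrightarrow> j \<in> I \<Longrightarrow> l i (v j) = (if i = j then 1 else 0)"
    and "v ` I \<subseteq> S"
    and expand: "\<And>x. x \<in> S \<Longrightarrow> x = (\<Sum>j\<in>I. pscale (l j x) (v j))"
  shows "cdim S = card I"
proof -
  have inj: "inj_on v I"
    by (rule inj_onI) (metis dual one_neq_zero)
  have "S \<subseteq> pv.span (v ` I)"
  proof
    fix x assume "x \<in> S"
    then have "x = (\<Sum>j\<in>I. pscale (l j x) (v j))" by (rule expand)
    also have "\<dots> \<in> pv.span (v ` I)"
      by (intro pv.span_sum pv.span_scale pv.span_base) auto
    finally show "x \<in> pv.span (v ` I)" .
  qed
  moreover have "pv.independent (v ` I)"
  proof (rule pv.independent_if_scalars_zero)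
    fix f x assume sum0: "(\<Sum>y\<in>v ` I. pscale (f y) y) = 0" and "x \<in> v ` I"
    then obtain i where i: "i \<in> I" "x = v i" by auto
    interpret li: Vector_Spaces.linear pscale "(*)" "l i" by (rule linear[OF i(1)])
    have "0 = l i (\<Sum>j\<in>I. pscale (f (v j)) (v j))"
      using sum0 by (simp add: sum.reindex[OF inj])
    also have "\<dots> = (\<Sum>j\<in>I. if i = j then f (v j) else 0)"
      by (auto simp: li.sum li.scale dual i(1) intro!: sum.cong)
    also have "\<dots> = f x"
      using i \<open>finite I\<close> by simp
    finally show "f x = 0" by simp
  qed (use \<open>finite I\<close> in simp)
  ultimately have "card (v ` I) = cdim S"
    unfolding cdim_def using \<open>v ` I \<subseteq> S\<close> by (intro pv.basis_card_eq_dim)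
  with inj show ?thesis by (simp add: card_image)
qed

lemma cdim_linear_image:
  assumes "Vector_Spaces.linear pscale pscale f" and "inj_on f (pv.span S)"
  shows "cdim (f ` S) = cdim S"
proof -
  interpret f: Vector_Spaces.linear pscale pscale f by fact
  obtain B where B: "B \<subseteq> S" "pv.independent B" "S \<subseteq> pv.span B" "card B = cdim S"
    using pv.basis_exists[of S] unfolding cdim_def by blast
  have "inj_on f (pv.span B)"
    using assms(2) by (rule inj_on_subset) (use B in \<open>simp add: pv.span_mono\<close>)
  then have "pv.independent (f ` B)" and "card (f ` B) = card B"
    using B(2) f.independent_injective_image card_image inj_on_subset[OF _ pv.span_superset]
    by blast+
  moreover have "f ` B \<subseteq> f ` S" "f ` S \<subseteq> pv.span (f ` B)"
    using B(1,3) by (auto simp: f.spans_image)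
  ultimately show ?thesis
    using B(4) pv.basis_card_eq_dim unfolding cdim_def by metis
qed

lemma homeomorphism_linear_image_Int:
  assumes "bounded_linear L" and "bounded_linear L'"
    and inv: "\<And>y. L' (L y) = y" "\<And>y. L (L' y) = y"
  shows "homeomorphism (R \<inter> U) (L ` R \<inter> L' -` U) L L'"
proof -
  have "L ` R \<inter> L' -` U = L ` (R \<inter> U)"
    using inv by (auto simp: image_iff)
  then show ?thesis
    using inv assms(1,2) by (intro homeomorphismI) (auto intro: linear_continuous_on)
qed

lemma complex_manifold_at_linear_image:
  assumes "complex_manifold_at R x d"
    and L: "Vector_Spaces.linear pscale pscale L" and L': "Vector_Spaces.linear pscale pscale L'"
    and inv: "\<And>y. L' (L y) = y" "\<And>y. L (L' y) = y"
  shows "complex_manifold_at (L ` R) (L x) d"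
proof -
  obtain W U V \<phi> \<psi> where W: "csubspace W" "cdim W = d" and U: "open U" "x \<in> U"
    and V: "openin (top_of_set W) V" and hom: "homeomorphism V (R \<inter> U) \<phi> \<psi>"
    and der: "\<forall>v\<in>V. \<exists>D. (\<phi> has_derivative D) (at v within W) \<and> inj_on D W \<and>
              (\<forall>c w. w \<in> W \<longrightarrow> D (pscale c w) = pscale c (D w))"
    using assms(1) unfolding complex_manifold_at_def by blast
  have bl: "bounded_linear L" "bounded_linear L'"
    using L L' by (simp_all add: pscale_linear_imp_bounded_linear)
  have "open (L' -` U)"
    using \<open>open U\<close> bl(2) by (simp add: continuous_open_vimage linear_continuous_at)
  moreover have "L x \<in> L' -` U"
    using U inv by simp
  moreover have "homeomorphism V (L ` R \<inter> L' -` U) (L \<circ> \<phi>) (\<psi> \<circ> L')"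
    using homeomorphism_compose[OF hom homeomorphism_linear_image_Int[OF bl inv]] .
  moreover have "\<exists>D. ((L \<circ> \<phi>) has_derivative D) (at v within W) \<and> inj_on D W \<and>
      (\<forall>c w. w \<in> W \<longrightarrow> D (pscale c w) = pscale c (D w))" if "v \<in> V" for v
  proof -
    obtain D where D: "(\<phi> has_derivative D) (at v within W)" "inj_on D W"
      "\<forall>c w. w \<in> W \<longrightarrow> D (pscale c w) = pscale c (D w)"
      using der \<open>v \<in> V\<close> by blast
    interpret L: Vector_Spaces.linear pscale pscale L by (fact L)
    have "inj L"
      using inv by (metis injI)
    have "((L \<circ> \<phi>) has_derivative (L \<circ> D)) (at v within W)"
      using bounded_linear.has_derivative[OF bl(1) D(1)] by (simp add: o_def)
    moreover have "inj_on (L \<circ> D) W"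
      using comp_inj_on[OF D(2) inj_on_subset[OF \<open>inj L\<close> subset_UNIV]] .
    moreover have "\<forall>c w. w \<in> W \<longrightarrow> (L \<circ> D) (pscale c w) = pscale c ((L \<circ> D) w)"
      using D(3) by (simp add: L.scale)
    ultimately show ?thesis by blast
  qed
  ultimately show ?thesis
    unfolding complex_manifold_at_def using W V by blast
qed

section \<open>Conjugation and the Zariski tangent space\<close>

definition conj_rep :: "complex^2^2 \<Rightarrow> complex^2^2 \<Rightarrow> pt \<Rightarrow> pt" where
  "conj_rep P Q p = (P ** fst p ** Q, P ** snd p ** Q)"

lemma conj_rep_conj_rep:
  assumes "Q ** P = mat 1"
  shows "conj_rep Q P (conj_rep P Q p) = p"
proof -
  have "Q ** (P ** X ** Q) ** P = (Q ** P) ** X ** (Q ** P)" for X :: "complex^2^2"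
    by (simp add: matrix_mul_assoc)
  then show ?thesis by (simp add: conj_rep_def assms)
qed

lemma linear_conj_rep: "Vector_Spaces.linear pscale pscale (conj_rep P Q)"
  unfolding Vector_Spaces.linear_iff
  by (simp add: pv.vector_space_axioms conj_rep_def prod_eq_iff mat2_eq_iff algebra_simps)

lemma det_conj:
  fixes P Q X :: "'a::comm_ring_1^'n^'n"
  assumes "P ** Q = mat 1"
  shows "det (P ** X ** Q) = det X"
proof -
  have "det P * det Q = 1" by (metis assms det_I det_mul)
  then have "det P * det X * det Q = det X"
    by (metis mult.commute mult.left_commute mult_1_right)
  then show ?thesis by (simp add: det_mul)
qed

lemma conj_rep_in_RepK2:
  assumes "P ** Q = mat 1" "Q ** P = mat 1" "p \<in> RepK2"
  shows "conj_rep P Q p \<in> RepK2"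
proof -
  have QP: "Q ** (P ** Z) = Z" for Z :: "complex^2^2"
    by (simp add: matrix_mul_assoc assms(2))
  have "P ** X ** Q ** (P ** Y ** Q) ** (P ** X ** Q) = P ** (X ** Y ** X) ** Q"
    for X Y :: "complex^2^2"
    by (simp add: QP flip: matrix_mul_assoc)
  with assms show ?thesis
    by (auto simp: RepK2_def conj_rep_def det_conj)
qed

lemma conj_rep_image_RepK2:
  assumes "P ** Q = mat 1" "Q ** P = mat 1"
  shows "conj_rep P Q ` RepK2 = RepK2"
proof
  show "conj_rep P Q ` RepK2 \<subseteq> RepK2"
    using conj_rep_in_RepK2[OF assms] by blast
  show "RepK2 \<subseteq> conj_rep P Q ` RepK2"
    using conj_rep_in_RepK2[OF assms(2,1)] conj_rep_conj_rep[OF assms(1)] by (metis image_eqI subsetI)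
qed

text \<open>On 2x2 matrices det is a quadratic form, so its differential at X is the polarisation
  x \<mapsto> det (X + x) - det X - det x.\<close>
definition FK2_differential :: "pt \<Rightarrow> pt \<Rightarrow> complex \<times> complex \<times> (complex^2^2)" where
  "FK2_differential r v =
     (det (fst r + fst v) - det (fst r) - det (fst v),
      det (snd r + snd v) - det (snd r) - det (snd v),
      fst v ** snd r ** fst r + fst r ** snd v ** fst r + fst r ** snd r ** fst v - snd v)"

lemma has_derivative_FK2: "(FK2 has_derivative FK2_differential r) (at r)"
proof -
  have "((\<lambda>p::pt. det (fst p) - 1) has_derivative
      (\<lambda>v. det (fst r + fst v) - det (fst r) - det (fst v))) (at r)"
    unfolding det_2 by (rule has_derivative_eq_rhs, (rule derivative_intros)+) (auto simp: algebra_simps)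
  moreover have "((\<lambda>p::pt. det (snd p) - 1) has_derivative
      (\<lambda>v. det (snd r + snd v) - det (snd r) - det (snd v))) (at r)"
    unfolding det_2 by (rule has_derivative_eq_rhs, (rule derivative_intros)+) (auto simp: algebra_simps)
  moreover have "((\<lambda>p::pt. fst p ** snd p ** fst p - snd p) has_derivative
      (\<lambda>v. fst v ** snd r ** fst r + fst r ** snd v ** fst r + fst r ** snd r ** fst v - snd v)) (at r)"
    by (rule has_derivative_matrix_entrywise,
        simp only: vector_minus_component vector_add_component matrix_matrix_mult_nth2)
      (rule has_derivative_eq_rhs, (rule derivative_intros)+, simp add: algebra_simps)
  ultimately show ?thesis
    unfolding FK2_def FK2_differential_def by (intro has_derivative_Pair) auto
qed

lemma zariski_tangent_eq: "zariski_tangent r = {v. FK2_differential r v = 0}"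
  unfolding zariski_tangent_def using frechet_derivative_at[OF has_derivative_FK2] by simp

lemma FK2_differential_conj_rep:
  assumes "P ** Q = mat 1" "Q ** P = mat 1"
  shows "FK2_differential (conj_rep P Q r) (conj_rep P Q v) =
    (fst (FK2_differential r v), fst (snd (FK2_differential r v)),
     P ** snd (snd (FK2_differential r v)) ** Q)"
proof -
  have QP: "Q ** (P ** Z) = Z" for Z :: "complex^2^2"
    by (simp add: matrix_mul_assoc assms(2))
  have triple: "P ** X ** Q ** (P ** Y ** Q) ** (P ** Z ** Q) = P ** (X ** Y ** Z) ** Q"
    for X Y Z :: "complex^2^2"
    by (simp add: QP flip: matrix_mul_assoc)
  have add: "P ** X ** Q + P ** Y ** Q = P ** (X + Y) ** Q" for X Y :: "complex^2^2"
    by (simp add: matrix_add_ldistrib matrix_add_rdistrib)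
  have diff: "P ** X ** Q - P ** Y ** Q = P ** (X - Y) ** Q" for X Y :: "complex^2^2"
    by (simp add: matrix_diff_ldistrib matrix_diff_rdistrib)
  show ?thesis
    unfolding FK2_differential_def conj_rep_def fst_conv snd_conv
    by (simp only: triple add diff det_conj[OF assms(1)])
qed

lemma zariski_tangent_conj_rep:
  assumes "P ** Q = mat 1" "Q ** P = mat 1"
  shows "zariski_tangent (conj_rep P Q r) = conj_rep P Q ` zariski_tangent r"
proof -
  have cancel: "X = 0" if "P ** X ** Q = 0" for X :: "complex^2^2"
  proof -
    have "X = (Q ** P) ** X ** (Q ** P)" by (simp add: assms(2))
    also have "\<dots> = Q ** (P ** X ** Q) ** P" by (simp add: matrix_mul_assoc)
    finally show "X = 0" using that by simp
  qed
  have iff: "v \<in> zariski_tangent (conj_rep P Q r) \<longleftrightarrow> conj_rep Q P v \<in> zariski_tangent r" for v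
  proof -
    have "FK2_differential (conj_rep P Q r) v =
        FK2_differential (conj_rep P Q r) (conj_rep P Q (conj_rep Q P v))"
      by (simp only: conj_rep_conj_rep[OF assms(1)])
    then show ?thesis
      using FK2_differential_conj_rep[OF assms, of r "conj_rep Q P v"] cancel
      by (simp add: zariski_tangent_eq prod_eq_iff) (metis times0_left times0_right)
  qed
  show ?thesis
  proof (intro equalityI subsetI)
    fix v assume "v \<in> zariski_tangent (conj_rep P Q r)"
    then show "v \<in> conj_rep P Q ` zariski_tangent r"
      using iff conj_rep_conj_rep[OF assms(1)] by (metis image_eqI)
  next
    fix v assume "v \<in> conj_rep P Q ` zariski_tangent r"
    then show "v \<in> zariski_tangent (conj_rep P Q r)"
      using iff conj_rep_conj_rep[OF assms(2)] by auto
  qed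
qed

lemma cdim_zariski_tangent_conj_rep:
  assumes "P ** Q = mat 1" "Q ** P = mat 1"
  shows "cdim (zariski_tangent (conj_rep P Q r)) = cdim (zariski_tangent r)"
proof -
  have "inj (conj_rep P Q)"
    using conj_rep_conj_rep[OF assms(2)] by (metis injI)
  then show ?thesis
    unfolding zariski_tangent_conj_rep[OF assms]
    using cdim_linear_image[OF linear_conj_rep] by (metis inj_on_subset subset_UNIV)
qed

lemma complex_manifold_at_conj_rep:
  assumes "P ** Q = mat 1" "Q ** P = mat 1" and "complex_manifold_at RepK2 x d"
  shows "complex_manifold_at RepK2 (conj_rep P Q x) d"
  using complex_manifold_at_linear_image[OF assms(3) linear_conj_rep linear_conj_rep
      conj_rep_conj_rep[OF assms(2)] conj_rep_conj_rep[OF assms(1)]]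
  by (simp add: conj_rep_image_RepK2[OF assms(1,2)])

section \<open>Normal form of irreducible representations\<close>

lemma eigenvector_image_inverse_eigenvalue:
  fixes A B :: "'a::field^'n^'n"
  assumes rel: "A ** B ** A = B" and Av: "A *v v = l *s v" and "l \<noteq> 0"
  shows "A *v (B *v v) = (1 / l) *s (B *v v)"
proof -
  have "l *s (A *v (B *v v)) = A *v (B *v (A *v v))"
    by (simp add: Av vector_scalar_commute)
  also have "\<dots> = B *v v"
    by (simp add: matrix_vector_mul_assoc matrix_mul_assoc rel)
  finally have "(1 / l) *s (l *s (A *v (B *v v))) = (1 / l) *s (B *v v)"
    by simp
  then show ?thesis
    using \<open>l \<noteq> 0\<close> by (simp add: vector_smult_assoc)
qed

lemma eigenvalue_nonzero:
  fixes A :: "'a::field^'n^'n"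
  assumes "det A \<noteq> 0" and "A *v v = l *s v" and "v \<noteq> 0"
  shows "l \<noteq> 0"
  using assms by (metis invertible_det_nz invertible_left_inverse matrix_left_invertible_ker vector_smult_lzero)

lemma square_eq_neg_on_eigenvector:
  fixes A B :: "'a::field^2^2"
  assumes rel: "A ** B ** A = B" and "det B = 1" and Av: "A *v v = l *s v"
    and "l \<noteq> 0" and "l * l \<noteq> 1" and "B *v v \<noteq> 0"
  shows "B *v (B *v v) = - v"
proof -
  define w where "w = B *v v"
  define t where "t = trace B"
  have Aw: "A *v w = (1 / l) *s w"
    unfolding w_def using eigenvector_image_inverse_eigenvalue[OF rel Av \<open>l \<noteq> 0\<close>] .
  have Bw: "B *v w = t *s w - v"
    using cayley_hamilton_2[of B v] \<open>det B = 1\<close> by (simp add: w_def t_def)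
  have "A *v (B *v w) = (t / l) *s w - l *s v"
    unfolding Bw by (simp add: matrix_vector_mult_diff_distrib vector_scalar_commute Av Aw)
  moreover have "A *v (B *v w) = (l * t) *s w - l *s v"
    using eigenvector_image_inverse_eigenvalue[OF rel Aw] \<open>l \<noteq> 0\<close> unfolding Bw
    by (simp add: vector_ssub_ldistrib vector_smult_assoc)
  ultimately have "(t / l - l * t) *s w = 0"
    by (auto simp: vector_sub_rdistrib)
  with \<open>B *v v \<noteq> 0\<close> have "t / l = l * t"
    by (simp add: vector_mul_eq_0 w_def)
  with \<open>l \<noteq> 0\<close> have "t * (1 - l * l) = 0"
    by (simp add: field_simps)
  with \<open>l * l \<noteq> 1\<close> have "t = 0"
    by simp
  with Bw show ?thesis
    by (simp add: w_def)
qed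

definition klein_normal :: "complex \<Rightarrow> pt" where
  "klein_normal l = (mat2 l 0 0 (1/l), mat2 0 (-1) 1 0)"

lemma irreducible_rep_normal_form:
  assumes "\<rho> \<in> RepK2" and "irreducible_rep \<rho>"
  obtains P Q l where "P ** Q = mat 1" "Q ** P = mat 1" "l \<noteq> 0" "l * l \<noteq> 1"
    "\<rho> = conj_rep P Q (klein_normal l)"
proof -
  obtain A B where \<rho>: "\<rho> = (A, B)" by fastforce
  have dA: "det A = 1" and dB: "det B = 1" and rel: "A ** B ** A = B"
    using assms(1) by (auto simp: \<rho> RepK2_def)
  have no_common: "u = 0" if "A *v u = a *s u" "B *v u = b *s u" for u a b
    using assms(2) that by (auto simp: \<rho> irreducible_rep_def)
  obtain l v where "v \<noteq> 0" and Av: "A *v v = l *s v"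
    by (rule complex_2x2_has_eigenvector)
  with dA have "l \<noteq> 0"
    using eigenvalue_nonzero[of A v l] by simp
  define w where "w = B *v v"
  have Aw: "A *v w = (1 / l) *s w"
    unfolding w_def using eigenvector_image_inverse_eigenvalue[OF rel Av \<open>l \<noteq> 0\<close>] .
  define d where "d = v$1 * w$2 - w$1 * v$2"
  have "d \<noteq> 0"
  proof
    assume "d = 0"
    then obtain m where "B *v v = m *s v"
      using vec2_collinear[OF \<open>v \<noteq> 0\<close>] unfolding d_def w_def by blast
    with Av no_common \<open>v \<noteq> 0\<close> show False by blast
  qed
  define P where "P = mat2 (v$1) (w$1) (v$2) (w$2)"
  define Q where "Q = mat2 (w$2 / d) (- w$1 / d) (- v$2 / d) (v$1 / d)"
  have PQ: "P ** Q = mat 1" and QP: "Q ** P = mat 1"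
    using mat2_inverse[where a = "v$1" and b = "w$1" and c = "v$2" and d = "w$2"] \<open>d \<noteq> 0\<close>
    unfolding P_def Q_def d_def by simp_all
  have "A ** P = P ** mat2 l 0 0 (1/l)"
    using Av Aw by (simp add: P_def mat2_eq_iff vec2_eq_iff mult.commute)
  then have A: "A = P ** mat2 l 0 0 (1/l) ** Q"
    by (metis PQ matrix_mul_assoc matrix_mul_rid)
  have "l * l \<noteq> 1"
  proof
    assume "l * l = 1"
    with \<open>l \<noteq> 0\<close> have "1 / l = l" by (simp add: field_simps)
    have "P ** mat2 l 0 0 l = mat2 l 0 0 l ** P" by (simp add: mat2_eq_iff mult.commute)
    then have "A = mat2 l 0 0 l"
      using A \<open>1 / l = l\<close> PQ by (metis matrix_mul_assoc matrix_mul_rid)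
    moreover obtain u m where "u \<noteq> 0" "B *v u = m *s u"
      by (rule complex_2x2_has_eigenvector)
    ultimately show False
      using no_common[of u l m] by (simp add: vec2_eq_iff)
  qed
  have "w \<noteq> 0"
    using \<open>d \<noteq> 0\<close> by (auto simp: d_def)
  then have "B *v w = - v"
    using square_eq_neg_on_eigenvector[OF rel dB Av \<open>l \<noteq> 0\<close> \<open>l * l \<noteq> 1\<close>] by (simp add: w_def)
  then have "B ** P = P ** mat2 0 (-1) 1 0"
    using w_def by (simp add: P_def mat2_eq_iff vec2_eq_iff)
  then have B: "B = P ** mat2 0 (-1) 1 0 ** Q"
    by (metis PQ matrix_mul_assoc matrix_mul_rid)
  show thesis
    using that[OF PQ QP \<open>l \<noteq> 0\<close> \<open>l * l \<noteq> 1\<close>] A B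
    by (simp add: \<rho> conj_rep_def klein_normal_def)
qed

section \<open>The tangent space at the normal form\<close>

lemma FK2_differential_klein_normal_eq_0:
  assumes "l \<noteq> 0" and "l * l \<noteq> 1"
  shows "FK2_differential (klein_normal l) (mat2 a11 a12 a21 a22, mat2 b11 b12 b21 b22) = 0 \<longleftrightarrow>
    a21 = a12 + (l - 1 / l) * b11 \<and> a22 = - a11 / (l * l) \<and> b21 = b12 \<and> b22 = - b11"
    (is "?DF = 0 \<longleftrightarrow> ?rhs")
proof -
  have "?DF = 0 \<longleftrightarrow> a11 + l * l * a22 = 0 \<and> b21 = b12 \<and>
      l * a21 = l * a12 + (l * l - 1) * b11 \<and> l * b22 + l * l * a12 = l * l * a21 + l * l * l * b22"
    using assms(1) by (simp add: FK2_differential_def klein_normal_def det_2 prod_eq_iff mat2_eq_iff field_simps)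
      (auto simp: algebra_simps neg_eq_iff_add_eq_0)
  also have "\<dots> \<longleftrightarrow> ?rhs"
  proof
    assume E: "a11 + l * l * a22 = 0 \<and> b21 = b12 \<and>
      l * a21 = l * a12 + (l * l - 1) * b11 \<and> l * b22 + l * l * a12 = l * l * a21 + l * l * l * b22"
    then have "l * (1 - l * l) * (b11 + b22) = 0"
      by algebra
    with assms have "b22 = - b11"
      by (simp add: add_eq_0_iff2 add.commute)
    with assms E show ?rhs
      by (auto simp: field_simps add_eq_0_iff)
  next
    assume ?rhs
    with assms(1) have E3: "l * a21 = l * a12 + (l * l - 1) * b11"
      by (simp add: field_simps)
    then have "l * l * a21 = l * (l * a12 + (l * l - 1) * b11)"
      by (metis mult.assoc)
    with \<open>?rhs\<close> assms(1) E3 show "a11 + l * l * a22 = 0 \<and> b21 = b12 \<and>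
      l * a21 = l * a12 + (l * l - 1) * b11 \<and> l * b22 + l * l * a12 = l * l * a21 + l * l * l * b22"
      by (simp add: algebra_simps)
  qed
  finally show ?thesis .
qed

lemma zariski_tangent_klein_normal:
  assumes "l \<noteq> 0" and "l * l \<noteq> 1"
  shows "zariski_tangent (klein_normal l) =
    {v. fst v$2$1 = fst v$1$2 + (l - 1 / l) * snd v$1$1 \<and> fst v$2$2 = - fst v$1$1 / (l * l) \<and>
        snd v$2$1 = snd v$1$2 \<and> snd v$2$2 = - snd v$1$1}"
  using FK2_differential_klein_normal_eq_0[OF assms]
  by (auto simp: zariski_tangent_eq) (metis mat2_eta prod.collapse)+

definition top_rows :: "pt \<Rightarrow> pt" where
  "top_rows p = (mat2 (fst p$1$1) (fst p$1$2) 0 0, mat2 (snd p$1$1) (snd p$1$2) 0 0)"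

definition top_row_space :: "pt set" where
  "top_row_space = {p. fst p$2$1 = 0 \<and> fst p$2$2 = 0 \<and> snd p$2$1 = 0 \<and> snd p$2$2 = 0}"

lemma csubspace_top_row_space: "csubspace top_row_space"
  unfolding csubspace_def subspace_def top_row_space_def by auto

lemma top_rows_in_top_row_space: "top_rows p \<in> top_row_space"
  by (simp add: top_rows_def top_row_space_def)

lemma top_rows_id: "p \<in> top_row_space \<Longrightarrow> top_rows p = p"
  by (simp add: top_rows_def top_row_space_def prod_eq_iff mat2_eq_iff)

lemma linear_top_rows: "Vector_Spaces.linear pscale pscale top_rows"
  unfolding Vector_Spaces.linear_iff
  by (simp add: pv.vector_space_axioms top_rows_def prod_eq_iff mat2_eq_iff algebra_simps)

lemma cdim_top_row_space: "cdim top_row_space = 4"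
proof -
  define l :: "nat \<Rightarrow> pt \<Rightarrow> complex" where
    "l i p = [fst p$1$1, fst p$1$2, snd p$1$1, snd p$1$2] ! i" for i p
  define v :: "nat \<Rightarrow> pt" where
    "v j = [(mat2 1 0 0 0, 0), (mat2 0 1 0 0, 0), (0, mat2 1 0 0 0), (0, mat2 0 1 0 0)] ! j" for j
  have "cdim top_row_space = card {0, 1, 2, 3 :: nat}"
  proof (rule cdim_eq_card_dual_basis[where l = l and v = v])
    show "Vector_Spaces.linear pscale (*) (l i)" if "i \<in> {0, 1, 2, 3}" for i
      using that unfolding Vector_Spaces.linear_iff
      by (auto simp: l_def pv.vector_space_axioms vector_space_over_itself.vector_space_axioms)
    show "x = (\<Sum>j\<in>{0, 1, 2, 3}. pscale (l j x) (v j))" if "x \<in> top_row_space" for x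
      using that by (simp add: l_def v_def top_row_space_def prod_eq_iff mat2_eq_iff)
  qed (auto simp: l_def v_def top_row_space_def)
  then show ?thesis by simp
qed

lemma cdim_zariski_tangent_klein_normal:
  assumes "l \<noteq> 0" "l * l \<noteq> 1"
  shows "cdim (zariski_tangent (klein_normal l)) = 4"
proof -
  let ?T = "zariski_tangent (klein_normal l)"
  have "pv.subspace ?T"
    unfolding zariski_tangent_klein_normal[OF assms] pv.subspace_def
    using assms by (auto simp: field_simps) (metis distrib_left)
  moreover have "inj_on top_rows ?T"
    by (rule inj_onI) (auto simp: zariski_tangent_klein_normal[OF assms] top_rows_def prod_eq_iff mat2_eq_iff)
  ultimately have "cdim (top_rows ` ?T) = cdim ?T"
    by (metis cdim_linear_image linear_top_rows pv.span_eq_iff)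
  moreover have "top_rows ` ?T = top_row_space"
  proof (intro equalityI subsetI)
    fix w assume "w \<in> top_row_space"
    define a where "a = mat2 (fst w$1$1) (fst w$1$2) (fst w$1$2 + (l - 1 / l) * snd w$1$1) (- fst w$1$1 / (l * l))"
    define b where "b = mat2 (snd w$1$1) (snd w$1$2) (snd w$1$2) (- snd w$1$1)"
    have "(a, b) \<in> ?T" "top_rows (a, b) = w"
      using \<open>w \<in> top_row_space\<close>
      by (auto simp: zariski_tangent_klein_normal[OF assms] a_def b_def top_rows_def top_row_space_def
          prod_eq_iff mat2_eq_iff)
    then show "w \<in> top_rows ` ?T" by blast
  qed (auto simp: top_rows_in_top_row_space)
  ultimately show ?thesis
    using cdim_top_row_space by simp
qed

definition cdifferentiable :: "(pt \<Rightarrow> complex) \<Rightarrow> pt \<Rightarrow> bool" where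
  "cdifferentiable f w \<longleftrightarrow> (\<exists>D. (f has_derivative D) (at w) \<and> (\<forall>c h. D (pscale c h) = c * D h))"

lemma cdifferentiable_const: "cdifferentiable (\<lambda>x. k) w"
  unfolding cdifferentiable_def by (intro exI[of _ "\<lambda>h. 0"]) (auto intro: derivative_eq_intros)

lemma cdifferentiable_fst_entry: "cdifferentiable (\<lambda>x. fst x $ i $ j) w"
  unfolding cdifferentiable_def
  by (intro exI[of _ "\<lambda>h. fst h $ i $ j"]) (auto intro!: derivative_eq_intros)

lemma cdifferentiable_snd_entry: "cdifferentiable (\<lambda>x. snd x $ i $ j) w"
  unfolding cdifferentiable_def
  by (intro exI[of _ "\<lambda>h. snd h $ i $ j"]) (auto intro!: derivative_eq_intros)

lemma cdifferentiable_add: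
  assumes "cdifferentiable f w" "cdifferentiable g w"
  shows "cdifferentiable (\<lambda>x. f x + g x) w"
proof -
  obtain Df Dg where "(f has_derivative Df) (at w)" "(g has_derivative Dg) (at w)"
    and "\<forall>c h. Df (pscale c h) = c * Df h" "\<forall>c h. Dg (pscale c h) = c * Dg h"
    using assms unfolding cdifferentiable_def by blast
  then show ?thesis
    unfolding cdifferentiable_def
    by (intro exI[of _ "\<lambda>h. Df h + Dg h"]) (auto intro: has_derivative_add simp: algebra_simps)
qed

lemma cdifferentiable_minus:
  assumes "cdifferentiable f w"
  shows "cdifferentiable (\<lambda>x. - f x) w"
proof -
  obtain Df where "(f has_derivative Df) (at w)" "\<forall>c h. Df (pscale c h) = c * Df h"
    using assms unfolding cdifferentiable_def by blast
  then show ?thesis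
    unfolding cdifferentiable_def
    by (intro exI[of _ "\<lambda>h. - Df h"]) (auto intro: has_derivative_minus)
qed

lemma cdifferentiable_diff:
  assumes "cdifferentiable f w" "cdifferentiable g w"
  shows "cdifferentiable (\<lambda>x. f x - g x) w"
  using cdifferentiable_add[OF assms(1) cdifferentiable_minus[OF assms(2)]] by simp

lemma cdifferentiable_mult:
  assumes "cdifferentiable f w" "cdifferentiable g w"
  shows "cdifferentiable (\<lambda>x. f x * g x) w"
proof -
  obtain Df Dg where "(f has_derivative Df) (at w)" "(g has_derivative Dg) (at w)"
    and "\<forall>c h. Df (pscale c h) = c * Df h" "\<forall>c h. Dg (pscale c h) = c * Dg h"
    using assms unfolding cdifferentiable_def by blast
  then have "((\<lambda>x. f x * g x) has_derivative (\<lambda>h. f w * Dg h + Df h * g w)) (at w)"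
    by (intro has_derivative_mult)
  moreover from \<open>\<forall>c h. Df (pscale c h) = c * Df h\<close> \<open>\<forall>c h. Dg (pscale c h) = c * Dg h\<close>
  have "\<forall>c h. f w * Dg (pscale c h) + Df (pscale c h) * g w = c * (f w * Dg h + Df h * g w)"
    by (simp add: algebra_simps)
  ultimately show ?thesis
    unfolding cdifferentiable_def by blast
qed

lemma cdifferentiable_divide:
  assumes "cdifferentiable f w" "cdifferentiable g w" "g w \<noteq> 0"
  shows "cdifferentiable (\<lambda>x. f x / g x) w"
proof -
  obtain Df Dg where "(f has_derivative Df) (at w)" "(g has_derivative Dg) (at w)"
    and "\<forall>c h. Df (pscale c h) = c * Df h" "\<forall>c h. Dg (pscale c h) = c * Dg h"
    using assms unfolding cdifferentiable_def by blast
  with assms(3) have "((\<lambda>x. f x / g x) has_derivative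
      (\<lambda>h. - f w * (inverse (g w) * Dg h * inverse (g w)) + Df h / g w)) (at w)"
    by (intro has_derivative_divide)
  moreover from \<open>\<forall>c h. Df (pscale c h) = c * Df h\<close> \<open>\<forall>c h. Dg (pscale c h) = c * Dg h\<close>
  have "\<forall>c h. - f w * (inverse (g w) * Dg (pscale c h) * inverse (g w)) + Df (pscale c h) / g w
      = c * (- f w * (inverse (g w) * Dg h * inverse (g w)) + Df h / g w)"
    by (simp add: algebra_simps)
  ultimately show ?thesis
    unfolding cdifferentiable_def by blast
qed

lemmas cdifferentiable_intros =
  cdifferentiable_const cdifferentiable_fst_entry cdifferentiable_snd_entry cdifferentiable_add
  cdifferentiable_minus cdifferentiable_diff cdifferentiable_mult cdifferentiable_divide

section \<open>A holomorphic chart at the normal form\<close>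

lemma K2_relation_iff_traces:
  fixes A B :: "complex^2^2"
  assumes "det A = 1" and "A$1$1 \<noteq> A$2$2"
  shows "A ** B ** A = B \<longleftrightarrow> trace B = 0 \<and> trace (A ** B) = 0"
proof -
  define t where "t = trace B"
  define c where "c = trace (A ** B) - trace A * t"
  define N where "N = mscale t A + mscale c (mat 1)"
  have "A ** B ** A - B - A ** N = mscale (det A - 1) B"
    by (simp add: N_def t_def c_def mat2_eq_iff det_2 trace_def sum_2 algebra_simps)
  with assms(1) have "A ** B ** A - B = A ** N"
    by (simp add: mat2_eq_iff)
  moreover have "A ** N = 0 \<longleftrightarrow> N = 0"
  proof
    assume "A ** N = 0"
    have "mat2 (A$2$2) (- A$1$2) (- A$2$1) (A$1$1) ** A = mat 1"
      using assms(1) by (simp add: mat2_eq_iff det_2 algebra_simps)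
    then show "N = 0"
      by (metis \<open>A ** N = 0\<close> matrix_mul_assoc matrix_mul_lid times0_right)
  qed simp
  moreover have "N = 0 \<longleftrightarrow> t = 0 \<and> c = 0"
  proof
    assume "N = 0"
    then have "t * A$1$1 + c = 0" "t * A$2$2 + c = 0"
      by (simp_all add: N_def mat2_eq_iff)
    moreover from this have "t * (A$1$1 - A$2$2) = 0"
      by algebra
    ultimately show "t = 0 \<and> c = 0"
      using assms(2) by simp
  qed (simp add: N_def mat2_eq_iff)
  ultimately show ?thesis
    by (auto simp: t_def c_def)
qed

definition chart_domain :: "pt set" where
  "chart_domain = {w. snd w$1$2 \<noteq> 0 \<and> fst w$1$1 * snd w$1$2 - fst w$1$2 * snd w$1$1 \<noteq> 0}"

text \<open>Given the top rows, det B = 1 and trace B = 0 determine the bottom row of B, and then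
  det A = 1 and trace (A ** B) = 0 form a linear system for the bottom row of A with determinant -m.\<close>
definition klein_chart :: "pt \<Rightarrow> pt" where
  "klein_chart w =
    (let a11 = fst w$1$1; a12 = fst w$1$2; b11 = snd w$1$1; b12 = snd w$1$2;
         b21 = - (1 + b11 * b11) / b12;
         r = - (a11 * b11 + a12 * b21);
         m = a11 * b12 - a12 * b11
     in (mat2 a11 a12 ((b11 + a11 * r) / m) ((a12 * r + b12) / m), mat2 b11 b12 b21 (- b11)))"

definition chart_region :: "pt set" where
  "chart_region = chart_domain \<inter> {p. fst p$1$1 \<noteq> fst p$2$2}"

definition chart_params :: "pt set" where
  "chart_params = top_row_space \<inter> (chart_domain \<inter> klein_chart -` chart_region)"

lemma top_rows_klein_chart: "top_rows (klein_chart w) = top_rows w"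
  by (simp add: klein_chart_def Let_def top_rows_def)

lemma klein_chart_equations:
  assumes "w \<in> chart_domain"
  shows "det (fst (klein_chart w)) = 1" "det (snd (klein_chart w)) = 1"
    "trace (snd (klein_chart w)) = 0" "trace (fst (klein_chart w) ** snd (klein_chart w)) = 0"
proof -
  define a11 where "a11 = fst w$1$1"
  define a12 where "a12 = fst w$1$2"
  define b11 where "b11 = snd w$1$1"
  define b12 where "b12 = snd w$1$2"
  define b21 where "b21 = - (1 + b11 * b11) / b12"
  define r where "r = - (a11 * b11 + a12 * b21)"
  define m where "m = a11 * b12 - a12 * b11"
  have "b12 \<noteq> 0" "m \<noteq> 0"
    using assms by (simp_all add: chart_domain_def a11_def a12_def b11_def b12_def m_def)
  have chart: "klein_chart w =
      (mat2 a11 a12 ((b11 + a11 * r) / m) ((a12 * r + b12) / m), mat2 b11 b12 b21 (- b11))"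
    by (simp add: klein_chart_def Let_def a11_def a12_def b11_def b12_def b21_def r_def m_def)
  show "det (fst (klein_chart w)) = 1"
    using \<open>m \<noteq> 0\<close> by (simp add: chart det_2 field_simps) (simp add: m_def algebra_simps)
  show "det (snd (klein_chart w)) = 1"
    using \<open>b12 \<noteq> 0\<close> by (simp add: chart det_2 b21_def field_simps)
  show "trace (snd (klein_chart w)) = 0"
    by (simp add: chart trace_def sum_2)
  show "trace (fst (klein_chart w) ** snd (klein_chart w)) = 0"
    using \<open>m \<noteq> 0\<close> by (simp add: chart trace_def sum_2 field_simps) (simp add: m_def r_def algebra_simps)
qed

lemma klein_chart_in_RepK2:
  assumes "w \<in> chart_domain" and "klein_chart w \<in> chart_region"
  shows "klein_chart w \<in> RepK2"
  using assms klein_chart_equations[OF assms(1)] K2_relation_iff_traces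
  by (auto simp: RepK2_def chart_region_def split: prod.splits)

lemma klein_chart_top_rows:
  assumes "p \<in> RepK2" and "p \<in> chart_region"
  shows "klein_chart (top_rows p) = p"
proof -
  obtain A B where p: "p = (A, B)" by fastforce
  have dA: "A$1$1 * A$2$2 - A$1$2 * A$2$1 = 1" and dB: "B$1$1 * B$2$2 - B$1$2 * B$2$1 = 1"
    and "A$1$1 \<noteq> A$2$2" and b12: "B$1$2 \<noteq> 0" and m: "A$1$1 * B$1$2 - A$1$2 * B$1$1 \<noteq> 0"
    using assms by (auto simp: p RepK2_def chart_region_def chart_domain_def det_2)
  then have "trace B = 0" "trace (A ** B) = 0"
    using assms K2_relation_iff_traces[of A B] by (auto simp: p RepK2_def)
  then have b22: "B$2$2 = - B$1$1"
    and tr: "A$1$1 * B$1$1 + A$1$2 * B$2$1 + A$2$1 * B$1$2 + A$2$2 * B$2$2 = 0"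
    by (auto simp: trace_def sum_2 add_eq_0_iff algebra_simps)
  have b21: "B$2$1 = - (1 + B$1$1 * B$1$1) / B$1$2"
    using dB b12 unfolding b22 by (simp add: field_simps)
  define r where "r = - (A$1$1 * B$1$1 + A$1$2 * B$2$1)"
  have "A$2$1 * (A$1$1 * B$1$2 - A$1$2 * B$1$1) = B$1$1 + A$1$1 * r"
       "A$2$2 * (A$1$1 * B$1$2 - A$1$2 * B$1$1) = A$1$2 * r + B$1$2"
    using dA tr unfolding r_def b22 by algebra+
  with m have "A$2$1 = (B$1$1 + A$1$1 * r) / (A$1$1 * B$1$2 - A$1$2 * B$1$1)"
      "A$2$2 = (A$1$2 * r + B$1$2) / (A$1$1 * B$1$2 - A$1$2 * B$1$1)"
    by (simp_all add: eq_divide_eq)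
  with b21 b22 show ?thesis
    unfolding p klein_chart_def Let_def top_rows_def r_def
    by (simp add: prod_eq_iff mat2_eq_iff)
qed

lemma klein_chart_derivative:
  assumes "w \<in> chart_domain"
  obtains D where "(klein_chart has_derivative D) (at w)"
    and "\<And>c h. D (pscale c h) = pscale c (D h)" and "\<And>h. top_rows (D h) = top_rows h"
proof -
  have "cdifferentiable (\<lambda>x. fst (klein_chart x) $ 2 $ 1) w"
    "cdifferentiable (\<lambda>x. fst (klein_chart x) $ 2 $ 2) w"
    "cdifferentiable (\<lambda>x. snd (klein_chart x) $ 2 $ 1) w"
    using assms unfolding klein_chart_def Let_def chart_domain_def
    by (simp_all, (intro cdifferentiable_intros; simp)+)
  then obtain Da Db Dc where
    Da: "((\<lambda>x. fst (klein_chart x) $ 2 $ 1) has_derivative Da) (at w)"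
      "\<And>c h. Da (pscale c h) = c * Da h" and
    Db: "((\<lambda>x. fst (klein_chart x) $ 2 $ 2) has_derivative Db) (at w)"
      "\<And>c h. Db (pscale c h) = c * Db h" and
    Dc: "((\<lambda>x. snd (klein_chart x) $ 2 $ 1) has_derivative Dc) (at w)"
      "\<And>c h. Dc (pscale c h) = c * Dc h"
    unfolding cdifferentiable_def by blast
  define D where "D h = (mat2 (fst h$1$1) (fst h$1$2) (Da h) (Db h),
      mat2 (snd h$1$1) (snd h$1$2) (Dc h) (- snd h$1$1))" for h
  have "(klein_chart has_derivative D) (at w)"
  proof (rule has_derivative_pt_entrywise)
    have top: "fst (klein_chart x) $ 1 $ 1 = fst x $ 1 $ 1" "fst (klein_chart x) $ 1 $ 2 = fst x $ 1 $ 2"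
      "snd (klein_chart x) $ 1 $ 1 = snd x $ 1 $ 1" "snd (klein_chart x) $ 1 $ 2 = snd x $ 1 $ 2"
      "snd (klein_chart x) $ 2 $ 2 = - snd x $ 1 $ 1" for x
      by (simp_all add: klein_chart_def Let_def mat2_def)
    fix i j :: 2
    consider "i = 1" "j = 1" | "i = 1" "j = 2" | "i = 2" "j = 1" | "i = 2" "j = 2"
      using exhaust_2 by metis
    then show "((\<lambda>x. fst (klein_chart x) $ i $ j) has_derivative (\<lambda>h. fst (D h) $ i $ j)) (at w)"
      and "((\<lambda>x. snd (klein_chart x) $ i $ j) has_derivative (\<lambda>h. snd (D h) $ i $ j)) (at w)"
      by (cases; simp add: top D_def Da(1) Db(1) Dc(1); (rule derivative_intros)+)+
  qed
  moreover have "D (pscale c h) = pscale c (D h)" for c h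
    by (simp add: D_def Da(2) Db(2) Dc(2) prod_eq_iff mat2_eq_iff)
  moreover have "top_rows (D h) = top_rows h" for h
    by (simp add: D_def top_rows_def)
  ultimately show thesis
    using that by blast
qed

lemma open_chart_domain: "open chart_domain"
  unfolding chart_domain_def Collect_conj_eq
  by (intro open_Int open_Collect_neq continuous_intros)

lemma open_chart_region: "open chart_region"
  unfolding chart_region_def
  by (intro open_Int open_chart_domain open_Collect_neq continuous_intros)

lemma continuous_on_klein_chart: "continuous_on chart_domain klein_chart"
  unfolding klein_chart_def Let_def
  by (intro continuous_intros) (auto simp: chart_domain_def)

lemma chart_domain_top_rows: "top_rows p \<in> chart_domain \<longleftrightarrow> p \<in> chart_domain"
  by (simp add: chart_domain_def top_rows_def)

lemma homeomorphism_klein_chart: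
  "homeomorphism chart_params (RepK2 \<inter> chart_region) klein_chart top_rows"
proof (rule homeomorphismI)
  show "continuous_on chart_params klein_chart"
    by (rule continuous_on_subset[OF continuous_on_klein_chart]) (auto simp: chart_params_def)
  show "continuous_on (RepK2 \<inter> chart_region) top_rows"
    unfolding top_rows_def by (intro continuous_intros)
  show "klein_chart ` chart_params \<subseteq> RepK2 \<inter> chart_region"
    by (rule image_subsetI) (simp add: chart_params_def klein_chart_in_RepK2)
  show "top_rows ` (RepK2 \<inter> chart_region) \<subseteq> chart_params"
    using klein_chart_top_rows
    by (auto simp: chart_params_def top_rows_in_top_row_space chart_domain_top_rows chart_region_def)
  show "top_rows (klein_chart w) = w" if "w \<in> chart_params" for w
    using that by (simp add: top_rows_klein_chart top_rows_id chart_params_def)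
  show "klein_chart (top_rows p) = p" if "p \<in> RepK2 \<inter> chart_region" for p
    using that klein_chart_top_rows by blast
qed

lemma complex_manifold_at_klein_normal:
  assumes "l \<noteq> 0" and "l * l \<noteq> 1"
  shows "complex_manifold_at RepK2 (klein_normal l) 4"
  unfolding complex_manifold_at_def
proof (rule exI[of _ top_row_space], rule exI[of _ chart_region], rule exI[of _ chart_params],
    rule exI[of _ klein_chart], rule exI[of _ top_rows], intro conjI)
  show "klein_normal l \<in> chart_region"
    using assms by (auto simp: klein_normal_def chart_region_def chart_domain_def field_simps)
  show "openin (top_of_set top_row_space) chart_params"
    unfolding chart_params_def
    by (intro openin_open_Int continuous_open_preimage continuous_on_klein_chart open_chart_domain
        open_chart_region)
  show "\<forall>v\<in>chart_params. \<exists>D. (klein_chart has_derivative D) (at v within top_row_space) \<and>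
      inj_on D top_row_space \<and> (\<forall>c w. w \<in> top_row_space \<longrightarrow> D (pscale c w) = pscale c (D w))"
  proof
    fix v assume "v \<in> chart_params"
    then have "v \<in> chart_domain" by (simp add: chart_params_def)
    then obtain D where "(klein_chart has_derivative D) (at v)"
      and "\<And>c h. D (pscale c h) = pscale c (D h)" and "\<And>h. top_rows (D h) = top_rows h"
      using klein_chart_derivative by metis
    moreover from \<open>\<And>h. top_rows (D h) = top_rows h\<close> have "inj_on D top_row_space"
      by (metis inj_onI top_rows_id)
    ultimately show "\<exists>D. (klein_chart has_derivative D) (at v within top_row_space) \<and>
      inj_on D top_row_space \<and> (\<forall>c w. w \<in> top_row_space \<longrightarrow> D (pscale c w) = pscale c (D w))"
      by (blast intro: has_derivative_at_withinI)
  qed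
qed (simp_all add: csubspace_top_row_space cdim_top_row_space open_chart_region homeomorphism_klein_chart)

theorem lemma4p3:
  fixes \<rho> :: pt
  assumes "\<rho> \<in> RepK2" and "irreducible_rep \<rho>"
  shows "smooth_point_K2 \<rho> \<and> cdim (zariski_tangent \<rho>) = 4"
proof -
  obtain P Q l where PQ: "P ** Q = mat 1" and QP: "Q ** P = mat 1" and l: "l \<noteq> 0" "l * l \<noteq> 1"
    and \<rho>: "\<rho> = conj_rep P Q (klein_normal l)"
    using irreducible_rep_normal_form[OF assms] .
  have "cdim (zariski_tangent \<rho>) = 4"
    unfolding \<rho> cdim_zariski_tangent_conj_rep[OF PQ QP] using l by (rule cdim_zariski_tangent_klein_normal)
  moreover have "complex_manifold_at RepK2 \<rho> 4"
    unfolding \<rho> using PQ QP complex_manifold_at_klein_normal[OF l] by (rule complex_manifold_at_conj_rep)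
  ultimately show ?thesis
    using assms(1) unfolding smooth_point_K2_def by blast
qed

end
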